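(* Let $(M,g)$ be an $n$-dimensional Lorentzian manifold and let $K_{ij}=Ag_{ij}+Bu_iu_j$ (with $u$ unit timelike, $B\neq0$) be a divergence-free conformal Killing tensor with acceleration-free velocity, $\dot u_j=0$, and with $\dot B$ vanishing nowhere. Then $\nabla_ju_k=H(g_{jk}+u_ju_k)$ and $\nabla_jH=-\dot H\,u_j$ with $H=\dot B/(2B)$; that is, $(M,g)$ is a generalized Robertson–Walker spacetime.
   Context: A symmetric tensor $K_{ij}$ is a conformal Killing tensor if $\nabla_iK_{jl}+\nabla_jK_{li}+\nabla_lK_{ij}=\eta_ig_{jl}+\eta_jg_{li}+\eta_lg_{ij}$ with $\eta_i=\frac{\nabla_iK+2\nabla_jK^j{}_i}{n+2}$, $K=g^{ij}K_{ij}$; divergence-free means $\nabla^jK_{jk}=0$. For a scalar $f$, $\dot f=u^k\nabla_kf$; $\dot u_j=u^k\nabla_ku_j$. A Lorentzian manifold is a generalized Robertson–Walker (GRW) spacetime if (covariant characterization, equivalent to the warped metric $ds^2=-dt^2+a(t)^2g^\star_{\mu\nu}(\mathbf x)dx^\mu dx^\nu$) it admits a unit timelike vector field $u$ and a scalar $H$ with $\nabla_ju_k=H(g_{jk}+u_ju_k)$ and $\nabla_jH=-\dot H\,u_j$. *)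

theory Defs
  imports "HOL-Analysis.Analysis"
begin

text \<open>Local coordinate setting: an open set U of R^n (index type 'n, n = CARD('n)).
  Tensors are given by their components in these coordinates.\<close>

definition pd :: "'n::finite \<Rightarrow> (real^'n \<Rightarrow> real) \<Rightarrow> real^'n \<Rightarrow> real" where
  "pd i f x = frechet_derivative f (at x) (axis i 1)"

fun iter_pd :: "'n::finite list \<Rightarrow> (real^'n \<Rightarrow> real) \<Rightarrow> real^'n \<Rightarrow> real" where
  "iter_pd [] f = f"
| "iter_pd (i # is) f = pd i (iter_pd is f)"

definition smooth_on :: "(real^'n::finite) set \<Rightarrow> (real^'n \<Rightarrow> real) \<Rightarrow> bool" where
  "smooth_on U f \<longleftrightarrow> (\<forall>is. \<forall>x\<in>U. iter_pd is f differentiable (at x))"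

definition lorentzian_metric :: "(real^'n::finite) set \<Rightarrow> (real^'n \<Rightarrow> real^'n^'n) \<Rightarrow> bool" where
  "lorentzian_metric U g \<longleftrightarrow>
     (\<forall>i j. smooth_on U (\<lambda>x. g x $ i $ j)) \<and>
     (\<forall>x\<in>U. transpose (g x) = g x \<and>
        (\<exists>(i0::'n) (P::real^'n^'n). invertible P \<and>
           transpose P ** g x ** P = (\<chi> i j. if i = j then (if i = i0 then -1 else 1) else 0)))"

definition ginv :: "(real^'n::finite \<Rightarrow> real^'n^'n) \<Rightarrow> real^'n \<Rightarrow> 'n \<Rightarrow> 'n \<Rightarrow> real" where
  "ginv g x i j = matrix_inv (g x) $ i $ j"

definition christoffel :: "(real^'n::finite \<Rightarrow> real^'n^'n) \<Rightarrow> 'n \<Rightarrow> 'n \<Rightarrow> 'n \<Rightarrow> real^'n \<Rightarrow> real" where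
  "christoffel g k i j x = (1/2) * (\<Sum>l\<in>UNIV. ginv g x k l *
      (pd i (\<lambda>y. g y $ j $ l) x + pd j (\<lambda>y. g y $ i $ l) x - pd l (\<lambda>y. g y $ i $ j) x))"

definition cov1 :: "(real^'n::finite \<Rightarrow> real^'n^'n) \<Rightarrow> (real^'n \<Rightarrow> real^'n) \<Rightarrow> 'n \<Rightarrow> 'n \<Rightarrow> real^'n \<Rightarrow> real" where
  "cov1 g w j k x = pd j (\<lambda>y. w y $ k) x - (\<Sum>l\<in>UNIV. christoffel g l j k x * w x $ l)"

definition cov2 :: "(real^'n::finite \<Rightarrow> real^'n^'n) \<Rightarrow> (real^'n \<Rightarrow> 'n \<Rightarrow> 'n \<Rightarrow> real) \<Rightarrow> 'n \<Rightarrow> 'n \<Rightarrow> 'n \<Rightarrow> real^'n \<Rightarrow> real" where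
  "cov2 g T a b c x = pd a (\<lambda>y. T y b c) x
      - (\<Sum>m\<in>UNIV. christoffel g m a b x * T x m c)
      - (\<Sum>m\<in>UNIV. christoffel g m a c x * T x b m)"

definition raise :: "(real^'n::finite \<Rightarrow> real^'n^'n) \<Rightarrow> (real^'n \<Rightarrow> real^'n) \<Rightarrow> 'n \<Rightarrow> real^'n \<Rightarrow> real" where
  "raise g u k x = (\<Sum>l\<in>UNIV. ginv g x k l * u x $ l)"

definition dotd :: "(real^'n::finite \<Rightarrow> real^'n^'n) \<Rightarrow> (real^'n \<Rightarrow> real^'n) \<Rightarrow> (real^'n \<Rightarrow> real) \<Rightarrow> real^'n \<Rightarrow> real" where
  "dotd g u f x = (\<Sum>k\<in>UNIV. raise g u k x * pd k f x)"

definition accel :: "(real^'n::finite \<Rightarrow> real^'n^'n) \<Rightarrow> (real^'n \<Rightarrow> real^'n) \<Rightarrow> 'n \<Rightarrow> real^'n \<Rightarrow> real" where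
  "accel g u j x = (\<Sum>k\<in>UNIV. raise g u k x * cov1 g u k j x)"

definition trace2 :: "(real^'n::finite \<Rightarrow> real^'n^'n) \<Rightarrow> (real^'n \<Rightarrow> 'n \<Rightarrow> 'n \<Rightarrow> real) \<Rightarrow> real^'n \<Rightarrow> real" where
  "trace2 g K x = (\<Sum>i\<in>UNIV. \<Sum>j\<in>UNIV. ginv g x i j * K x i j)"

definition eta :: "(real^'n::finite \<Rightarrow> real^'n^'n) \<Rightarrow> (real^'n \<Rightarrow> 'n \<Rightarrow> 'n \<Rightarrow> real) \<Rightarrow> 'n \<Rightarrow> real^'n \<Rightarrow> real" where
  "eta g K i x = (pd i (trace2 g K) x
      + 2 * (\<Sum>j\<in>UNIV. \<Sum>m\<in>UNIV. ginv g x j m * cov2 g K j m i x)) / (real CARD('n) + 2)"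

definition conformal_killing :: "(real^'n::finite) set \<Rightarrow> (real^'n \<Rightarrow> real^'n^'n) \<Rightarrow> (real^'n \<Rightarrow> 'n \<Rightarrow> 'n \<Rightarrow> real) \<Rightarrow> bool" where
  "conformal_killing U g K \<longleftrightarrow> (\<forall>x\<in>U. \<forall>i j l.
      cov2 g K i j l x + cov2 g K j l i x + cov2 g K l i j x
      = eta g K i x * g x $ j $ l + eta g K j x * g x $ l $ i + eta g K l x * g x $ i $ j)"

definition divergence_free :: "(real^'n::finite) set \<Rightarrow> (real^'n \<Rightarrow> real^'n^'n) \<Rightarrow> (real^'n \<Rightarrow> 'n \<Rightarrow> 'n \<Rightarrow> real) \<Rightarrow> bool" where
  "divergence_free U g K \<longleftrightarrow> (\<forall>x\<in>U. \<forall>k. (\<Sum>j\<in>UNIV. \<Sum>i\<in>UNIV. ginv g x j i * cov2 g K i j k x) = 0)"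

end

theory Submission
  imports Defs
begin

text \<open>Write \<open>Bdot = u\<^sup>k \<partial>\<^sub>k B\<close>. Since \<open>g\<close> is parallel,
  \<open>\<nabla>\<^sub>a K\<^sub>b\<^sub>c = \<partial>\<^sub>a A g\<^sub>b\<^sub>c + \<partial>\<^sub>a B u\<^sub>b u\<^sub>c + B (\<nabla>\<^sub>a u\<^sub>b u\<^sub>c + u\<^sub>b \<nabla>\<^sub>a u\<^sub>c)\<close>.
  Differentiating \<open>u\<^sup>k u\<^sub>k = -1\<close> gives \<open>u\<^sup>k \<nabla>\<^sub>a u\<^sub>k = 0\<close>, and together with \<open>u\<^sup>k \<nabla>\<^sub>k u\<^sub>j = 0\<close> the
  divergence condition forces \<open>\<nabla>A\<close> to be parallel to \<open>u\<close>. Contracting the conformal Killing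
  equation twice with \<open>u\<close> then yields \<open>\<partial>\<^sub>k B = -Bdot u\<^sub>k\<close> and
  \<open>B (\<nabla>\<^sub>j u\<^sub>l + \<nabla>\<^sub>l u\<^sub>j) = Bdot (g\<^sub>j\<^sub>l + u\<^sub>j u\<^sub>l)\<close>. Finally the Hessian of \<open>B\<close> is symmetric,
  so \<open>\<partial>\<^sub>i(Bdot u\<^sub>j)\<close> is symmetric in \<open>i, j\<close>; contracted with \<open>u\<close> this shows that \<open>\<nabla>u\<close> is
  symmetric and \<open>\<nabla>Bdot\<close> is parallel to \<open>u\<close> (here \<open>Bdot \<noteq> 0\<close> is used). Hence
  \<open>\<nabla>\<^sub>j u\<^sub>k = H (g\<^sub>j\<^sub>k + u\<^sub>j u\<^sub>k)\<close> with \<open>H = Bdot / 2B\<close>, and \<open>\<nabla>H\<close>, a combination of \<open>\<nabla>Bdot\<close> and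
  \<open>\<nabla>B\<close>, is parallel to \<open>u\<close>.\<close>

section \<open>Partial derivatives\<close>

lemma pd_eq_derivative:
  assumes "(f has_derivative f') (at x)"
  shows "pd i f x = f' (axis i 1)"
  using assms unfolding pd_def by (metis frechet_derivative_at)

lemma pd_cong:
  assumes "open S" "x \<in> S" "\<And>y. y \<in> S \<Longrightarrow> f y = h y"
  shows "pd i f x = pd i h x"
proof -
  have "(f has_derivative D) (at x) \<longleftrightarrow> (h has_derivative D) (at x)" for D
    using has_derivative_transform_within_open assms by metis
  then show ?thesis unfolding pd_def frechet_derivative_def by simp
qed

lemma differentiable_cong_open:
  assumes "f differentiable (at x)" "open S" "x \<in> S" "\<And>y. y \<in> S \<Longrightarrow> f y = h y"
  shows "h differentiable (at x)"
  using assms has_derivative_transform_within_open[of f _ x UNIV S h] unfolding differentiable_def by blast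

lemma pd_const: "pd i (\<lambda>y. c) x = 0"
proof -
  have "((\<lambda>y. c) has_derivative (\<lambda>_. 0)) (at x)"
    by simp
  then show ?thesis
    by (rule pd_eq_derivative)
qed

lemma pd_add:
  assumes "f differentiable (at x)" "h differentiable (at x)"
  shows "pd i (\<lambda>y. f y + h y) x = pd i f x + pd i h x"
  using pd_eq_derivative[OF has_derivative_add[OF assms[unfolded frechet_derivative_works]]]
  unfolding pd_def .

lemma pd_diff:
  assumes "f differentiable (at x)" "h differentiable (at x)"
  shows "pd i (\<lambda>y. f y - h y) x = pd i f x - pd i h x"
  using pd_eq_derivative[OF has_derivative_diff[OF assms[unfolded frechet_derivative_works]]]
  unfolding pd_def .

lemma pd_minus:
  assumes "f differentiable (at x)"
  shows "pd i (\<lambda>y. - f y) x = - pd i f x"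
  using pd_eq_derivative[OF has_derivative_minus[OF assms[unfolded frechet_derivative_works]]]
  unfolding pd_def .

lemma pd_mult:
  assumes "f differentiable (at x)" "h differentiable (at x)"
  shows "pd i (\<lambda>y. f y * h y) x = f x * pd i h x + pd i f x * h x"
  using pd_eq_derivative[OF has_derivative_mult[OF assms[unfolded frechet_derivative_works]]]
  unfolding pd_def .

lemma pd_cmult: "f differentiable (at x) \<Longrightarrow> pd i (\<lambda>y. c * f y) x = c * pd i f x"
  using pd_mult[OF differentiable_const] by (simp add: pd_const)

lemma pd_sum:
  assumes "finite S" "\<And>k. k \<in> S \<Longrightarrow> f k differentiable (at x)"
  shows "pd i (\<lambda>y. \<Sum>k\<in>S. f k y) x = (\<Sum>k\<in>S. pd i (f k) x)"
  unfolding pd_def[of i "f _"]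
  by (rule pd_eq_derivative, rule has_derivative_sum) (use assms frechet_derivative_works in auto)

lemma pd_divide:
  assumes "f differentiable (at x)" "h differentiable (at x)" "h x \<noteq> 0"
  shows "pd i (\<lambda>y. f y / h y) x = (pd i f x * h x - f x * pd i h x) / (h x * h x)"
proof -
  have "((\<lambda>y. f y / h y) has_derivative
     (\<lambda>v. - f x * (inverse (h x) * frechet_derivative h (at x) v * inverse (h x))
          + frechet_derivative f (at x) v / h x)) (at x)"
    by (rule has_derivative_divide) (use assms frechet_derivative_works in auto)
  from pd_eq_derivative[OF this, of i] assms(3) show ?thesis
    unfolding pd_def by (simp add: field_simps)
qed

lemma iter_pd_append: "iter_pd (is @ js) f = iter_pd is (iter_pd js f)"
  by (induction "is") simp_all

lemma smooth_on_differentiable: "smooth_on U f \<Longrightarrow> x \<in> U \<Longrightarrow> f differentiable (at x)"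
  unfolding smooth_on_def by (metis iter_pd.simps(1))

lemma smooth_on_pd: "smooth_on U f \<Longrightarrow> smooth_on U (pd i f)"
proof -
  have "iter_pd is (pd i f) = iter_pd (is @ [i]) f" for "is"
    by (simp add: iter_pd_append)
  then show "smooth_on U f \<Longrightarrow> smooth_on U (pd i f)"
    unfolding smooth_on_def by presburger
qed

section \<open>Symmetry of second partial derivatives\<close>

lemma has_real_derivative_along_axis:
  fixes F :: "real^'n::finite \<Rightarrow> real"
  assumes "F differentiable (at (p + s *\<^sub>R axis k 1))"
  shows "((\<lambda>s. F (p + s *\<^sub>R axis k 1)) has_real_derivative pd k F (p + s *\<^sub>R axis k 1)) (at s)"
proof -
  let ?D = "frechet_derivative F (at (p + s *\<^sub>R axis k 1))"
  have "((\<lambda>s. p + s *\<^sub>R axis k 1) has_derivative (\<lambda>s. s *\<^sub>R axis k 1)) (at s)"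
    by (auto intro!: derivative_eq_intros)
  from has_derivative_compose[OF this frechet_derivative_works[THEN iffD1, OF assms]]
  have "((\<lambda>s. F (p + s *\<^sub>R axis k 1)) has_derivative (\<lambda>t. ?D (t *\<^sub>R axis k 1))) (at s)"
    by (simp add: o_def)
  moreover have "(\<lambda>t. ?D (t *\<^sub>R axis k 1)) = (\<lambda>t. pd k F (p + s *\<^sub>R axis k 1) * t)"
    using linear_scale[OF linear_frechet_derivative[OF assms]] by (auto simp: pd_def)
  ultimately show ?thesis unfolding has_field_derivative_def by simp
qed

lemma second_difference_mvt:
  fixes f :: "real^'n::finite \<Rightarrow> real"
  assumes h: "h > 0"
    and square: "\<And>s t. 0 \<le> s \<Longrightarrow> s \<le> h \<Longrightarrow> 0 \<le> t \<Longrightarrow> t \<le> h \<Longrightarrow>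
        x + s *\<^sub>R axis i 1 + t *\<^sub>R axis j 1 \<in> U"
    and f: "\<forall>y\<in>U. f differentiable (at y)" and fi: "\<forall>y\<in>U. pd i f differentiable (at y)"
  shows "\<exists>s t. 0 < s \<and> s < h \<and> 0 < t \<and> t < h \<and>
     f (x + h *\<^sub>R axis i 1 + h *\<^sub>R axis j 1) - f (x + h *\<^sub>R axis i 1) - f (x + h *\<^sub>R axis j 1) + f x
     = h * h * pd j (pd i f) (x + s *\<^sub>R axis i 1 + t *\<^sub>R axis j 1)"
proof -
  let ?ei = "axis i (1::real) :: real^'n" and ?ej = "axis j (1::real) :: real^'n"
  define \<phi> where "\<phi> s = f ((x + h *\<^sub>R ?ej) + s *\<^sub>R ?ei) - f (x + s *\<^sub>R ?ei)" for s
  have "\<exists>s. 0 < s \<and> s < h \<and> \<phi> h - \<phi> 0 = (h - 0) *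
      (pd i f ((x + h *\<^sub>R ?ej) + s *\<^sub>R ?ei) - pd i f (x + s *\<^sub>R ?ei))"
    unfolding \<phi>_def
  proof (rule MVT2[OF h])
    fix s assume s: "0 \<le> s" "s \<le> h"
    have "(x + h *\<^sub>R ?ej) + s *\<^sub>R ?ei \<in> U" "x + s *\<^sub>R ?ei \<in> U"
      using square[OF s, of h] square[OF s, of 0] h by (simp_all add: algebra_simps)
    then show "((\<lambda>s. f ((x + h *\<^sub>R ?ej) + s *\<^sub>R ?ei) - f (x + s *\<^sub>R ?ei)) has_real_derivative
       pd i f ((x + h *\<^sub>R ?ej) + s *\<^sub>R ?ei) - pd i f (x + s *\<^sub>R ?ei)) (at s)"
      by (intro DERIV_diff has_real_derivative_along_axis) (use f in auto)
  qed
  then obtain s where s: "0 < s" "s < h" and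
    \<phi>_mvt: "\<phi> h - \<phi> 0 = h * (pd i f ((x + s *\<^sub>R ?ei) + h *\<^sub>R ?ej) - pd i f (x + s *\<^sub>R ?ei))"
    by (auto simp: algebra_simps)
  have "\<exists>t. 0 < t \<and> t < h \<and>
      pd i f ((x + s *\<^sub>R ?ei) + h *\<^sub>R ?ej) - pd i f ((x + s *\<^sub>R ?ei) + 0 *\<^sub>R ?ej)
      = (h - 0) * pd j (pd i f) ((x + s *\<^sub>R ?ei) + t *\<^sub>R ?ej)"
  proof (rule MVT2[OF h])
    fix t assume t: "0 \<le> t" "t \<le> h"
    then have "(x + s *\<^sub>R ?ei) + t *\<^sub>R ?ej \<in> U"
      using square[of s t] s by simp
    then show "((\<lambda>t. pd i f ((x + s *\<^sub>R ?ei) + t *\<^sub>R ?ej)) has_real_derivative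
       pd j (pd i f) ((x + s *\<^sub>R ?ei) + t *\<^sub>R ?ej)) (at t)"
      by (intro has_real_derivative_along_axis) (use fi in auto)
  qed
  then obtain t where "0 < t" "t < h" and
    "pd i f ((x + s *\<^sub>R ?ei) + h *\<^sub>R ?ej) - pd i f (x + s *\<^sub>R ?ei)
     = h * pd j (pd i f) ((x + s *\<^sub>R ?ei) + t *\<^sub>R ?ej)"
    by auto
  moreover have "\<phi> h - \<phi> 0 = f (x + h *\<^sub>R ?ei + h *\<^sub>R ?ej) - f (x + h *\<^sub>R ?ei) - f (x + h *\<^sub>R ?ej) + f x"
    unfolding \<phi>_def by (simp add: algebra_simps)
  ultimately show ?thesis
    using s \<phi>_mvt by (metis mult.assoc)
qed

lemma pd_pd_commute:
  fixes f :: "real^'n::finite \<Rightarrow> real"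
  assumes "open U" "x \<in> U"
    and f: "\<forall>y\<in>U. f differentiable (at y)"
    and fi: "\<forall>y\<in>U. pd i f differentiable (at y)" and fj: "\<forall>y\<in>U. pd j f differentiable (at y)"
    and cont_ij: "continuous (at x) (pd j (pd i f))" and cont_ji: "continuous (at x) (pd i (pd j f))"
  shows "pd j (pd i f) x = pd i (pd j f) x"
proof (rule ccontr)
  let ?ei = "axis i (1::real) :: real^'n" and ?ej = "axis j (1::real) :: real^'n"
  assume ne: "pd j (pd i f) x \<noteq> pd i (pd j f) x"
  define e where "e = \<bar>pd j (pd i f) x - pd i (pd j f) x\<bar> / 2"
  have e: "e > 0"
    using ne by (simp add: e_def)
  obtain d1 where d1: "d1 > 0" "\<And>y. dist y x < d1 \<Longrightarrow> \<bar>pd j (pd i f) y - pd j (pd i f) x\<bar> < e"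
    using cont_ij e unfolding continuous_at_eps_delta dist_real_def by metis
  obtain d2 where d2: "d2 > 0" "\<And>y. dist y x < d2 \<Longrightarrow> \<bar>pd i (pd j f) y - pd i (pd j f) x\<bar> < e"
    using cont_ji e unfolding continuous_at_eps_delta dist_real_def by metis
  obtain r where r: "r > 0" "ball x r \<subseteq> U"
    using assms(1,2) open_contains_ball by blast
  define h where "h = min r (min d1 d2) / 3"
  have h: "h > 0"
    using r d1 d2 by (simp add: h_def)
  have near: "dist (x + s *\<^sub>R ?ei + t *\<^sub>R ?ej) x < min r (min d1 d2)"
    if "0 \<le> s" "s \<le> h" "0 \<le> t" "t \<le> h" for s t
  proof -
    have "dist (x + s *\<^sub>R ?ei + t *\<^sub>R ?ej) x \<le> norm (s *\<^sub>R ?ei) + norm (t *\<^sub>R ?ej)"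
      unfolding dist_norm by (simp add: norm_triangle_ineq del: norm_scaleR)
    also have "\<dots> < min r (min d1 d2)"
      using that h by (simp add: h_def)
    finally show ?thesis .
  qed
  have in_U: "x + s *\<^sub>R ?ei + t *\<^sub>R ?ej \<in> U" "x + t *\<^sub>R ?ej + s *\<^sub>R ?ei \<in> U"
    if "0 \<le> s" "s \<le> h" "0 \<le> t" "t \<le> h" for s t
    using near[OF that] r by (auto simp: dist_commute subset_iff algebra_simps)
  obtain s1 t1 where st1: "0 < s1" "s1 < h" "0 < t1" "t1 < h" and
    diff_ij: "f (x + h *\<^sub>R ?ei + h *\<^sub>R ?ej) - f (x + h *\<^sub>R ?ei) - f (x + h *\<^sub>R ?ej) + f x
     = h * h * pd j (pd i f) (x + s1 *\<^sub>R ?ei + t1 *\<^sub>R ?ej)"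
    using second_difference_mvt[OF h in_U(1) f fi] by blast
  obtain t2 s2 where st2: "0 < t2" "t2 < h" "0 < s2" "s2 < h" and
    diff_ji: "f (x + h *\<^sub>R ?ej + h *\<^sub>R ?ei) - f (x + h *\<^sub>R ?ej) - f (x + h *\<^sub>R ?ei) + f x
     = h * h * pd i (pd j f) (x + t2 *\<^sub>R ?ej + s2 *\<^sub>R ?ei)"
    using second_difference_mvt[OF h in_U(2) f fj] by blast
  have "pd j (pd i f) (x + s1 *\<^sub>R ?ei + t1 *\<^sub>R ?ej) = pd i (pd j f) (x + s2 *\<^sub>R ?ei + t2 *\<^sub>R ?ej)"
    using diff_ij diff_ji h by (simp add: algebra_simps)
  moreover have "\<bar>pd j (pd i f) (x + s1 *\<^sub>R ?ei + t1 *\<^sub>R ?ej) - pd j (pd i f) x\<bar> < e"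
    using d1(2) near[of s1 t1] st1 by auto
  moreover have "\<bar>pd i (pd j f) (x + s2 *\<^sub>R ?ei + t2 *\<^sub>R ?ej) - pd i (pd j f) x\<bar> < e"
    using d2(2) near[of s2 t2] st2 by auto
  ultimately show False
    unfolding e_def by (auto simp: abs_if split: if_splits)
qed

section \<open>The inverse metric\<close>

lemma det_differentiable:
  fixes M :: "real^'n::finite \<Rightarrow> real^'m::finite^'m"
  assumes "\<And>i j. (\<lambda>y. M y $ i $ j) differentiable (at x)"
  shows "(\<lambda>y. det (M y)) differentiable (at x)"
proof -
  have "(\<lambda>y. \<Prod>i\<in>UNIV. M y $ i $ p i) differentiable (at x)" for p
    using has_derivative_prod[OF assms[unfolded frechet_derivative_works]] by (rule differentiableI)
  then show ?thesis
    unfolding det_def by (simp add: finite_permutations)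
qed

lemma lorentzian_metric_symmetric:
  "lorentzian_metric U g \<Longrightarrow> y \<in> U \<Longrightarrow> transpose (g y) = g y"
  unfolding lorentzian_metric_def by blast

lemma lorentzian_metric_det_nonzero:
  fixes g :: "real^'n::finite \<Rightarrow> real^'n^'n"
  assumes "lorentzian_metric U g" "y \<in> U"
  shows "det (g y) \<noteq> 0"
proof -
  from assms obtain i0 and P :: "real^'n^'n" where
    "transpose P ** g y ** P = (\<chi> i j. if i = j then (if i = i0 then -1 else 1) else 0)"
    unfolding lorentzian_metric_def by blast
  moreover have "det (\<chi> i j. if i = j then (if i = i0 then -1 else 1) else 0 :: real^'n^'n)
      = (\<Prod>i\<in>UNIV. if i = i0 then -1 else 1)"
    by (subst det_diagonal) auto
  ultimately have "det (transpose P ** g y ** P) \<noteq> 0"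
    by (simp add: prod_zero_iff)
  then show ?thesis
    by (simp add: det_mul)
qed

lemma matrix_inv_det_nonzero:
  fixes G :: "real^'n::finite^'n"
  assumes "det G \<noteq> 0"
  shows "G ** matrix_inv G = mat 1" "matrix_inv G ** G = mat 1"
proof -
  have "\<exists>G'. G ** G' = mat 1 \<and> G' ** G = mat 1"
    using assms invertible_det_nz unfolding invertible_def by blast
  then have "G ** matrix_inv G = mat 1 \<and> matrix_inv G ** G = mat 1"
    unfolding matrix_inv_def by (rule someI_ex)
  then show "G ** matrix_inv G = mat 1" "matrix_inv G ** G = mat 1"
    by auto
qed

lemma transpose_matrix_inv_symmetric:
  fixes G :: "real^'n::finite^'n"
  assumes "det G \<noteq> 0" "transpose G = G"
  shows "transpose (matrix_inv G) = matrix_inv G"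
proof -
  have "transpose (matrix_inv G) ** G = mat 1"
    using arg_cong[OF matrix_inv_det_nonzero(1)[OF assms(1)], of transpose] assms(2)
    by (simp add: matrix_transpose_mul)
  then have "transpose (matrix_inv G) ** (G ** matrix_inv G) = matrix_inv G"
    by (simp add: matrix_mul_assoc)
  then show ?thesis
    using matrix_inv_det_nonzero(1)[OF assms(1)] by simp
qed

lemma matrix_inv_cramer:
  fixes G :: "real^'n::finite^'n"
  assumes "det G \<noteq> 0"
  shows "matrix_inv G $ k $ m = det (\<chi> i j. if j = k then axis m 1 $ i else G $ i $ j) / det G"
proof -
  have "G *v (matrix_inv G *v axis m 1) = axis m 1"
    by (simp add: matrix_vector_mul_assoc matrix_inv_det_nonzero[OF assms])
  then have "matrix_inv G *v axis m 1 = (\<chi> k. det (\<chi> i j. if j = k then axis m 1 $ i else G $ i $ j) / det G)"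
    using cramer[OF assms] by blast
  moreover have "(matrix_inv G *v axis m 1) $ k = matrix_inv G $ k $ m"
    by (simp add: matrix_vector_mult_def axis_def if_distrib cong: if_cong)
  ultimately show ?thesis
    by simp
qed

lemma ginv_differentiable:
  assumes "open U" "lorentzian_metric U g" "x \<in> U"
  shows "(\<lambda>y. ginv g y k m) differentiable (at x)"
proof (rule differentiable_cong_open[OF _ assms(1,3)])
  have g: "(\<lambda>y. g y $ i $ j) differentiable (at x)" for i j
    using assms smooth_on_differentiable unfolding lorentzian_metric_def by blast
  show "(\<lambda>y. det (\<chi> i j. if j = k then axis m 1 $ i else g y $ i $ j) / det (g y)) differentiable (at x)"
  proof (intro differentiable_divide det_differentiable)
    show "(\<lambda>y. (\<chi> i j. if j = k then axis m 1 $ i else g y $ i $ j) $ i $ j) differentiable (at x)" for i j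
      by (cases "j = k") (simp_all add: g)
  qed (simp_all add: g lorentzian_metric_det_nonzero[OF assms(2,3)])
  show "det (\<chi> i j. if j = k then axis m 1 $ i else g y $ i $ j) / det (g y) = ginv g y k m" if "y \<in> U" for y
    unfolding ginv_def by (rule matrix_inv_cramer[symmetric], rule lorentzian_metric_det_nonzero[OF assms(2) that])
qed

section \<open>Pointwise tensor algebra\<close>

text \<open>In the lemmas of this section, at a fixed point, \<open>G\<close> and \<open>Gi\<close> are the components of the
  metric and its inverse, \<open>v\<close> is the raised velocity \<open>u\<^sup>k\<close> and \<open>C i j\<close> stands for \<open>\<nabla>\<^sub>i u\<^sub>j\<close>.\<close>

lemma divergence_condition_algebra:
  fixes G Gi C :: "'n::finite \<Rightarrow> 'n \<Rightarrow> real" and u v \<alpha> \<beta> :: "'n \<Rightarrow> real"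
  assumes Gi_G: "\<And>i k. (\<Sum>j\<in>UNIV. Gi j i * G j k) = (if i = k then 1 else 0)"
    and Gi_u: "\<And>i. (\<Sum>j\<in>UNIV. Gi j i * u j) = v i"
    and acc: "\<And>k. (\<Sum>i\<in>UNIV. v i * C i k) = 0"
    and div: "(\<Sum>i\<in>UNIV. \<Sum>j\<in>UNIV. Gi j i *
               (\<alpha> i * G j k + \<beta> i * u j * u k + b * (C i j * u k + u j * C i k))) = 0"
  shows "\<alpha> k = - ((\<Sum>i\<in>UNIV. v i * \<beta> i) + b * (\<Sum>i\<in>UNIV. \<Sum>j\<in>UNIV. Gi j i * C i j)) * u k"
proof -
  have "(\<Sum>i\<in>UNIV. \<Sum>j\<in>UNIV. Gi j i * (\<alpha> i * G j k + \<beta> i * u j * u k + b * (C i j * u k + u j * C i k)))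
    = (\<Sum>i\<in>UNIV. \<alpha> i * (\<Sum>j\<in>UNIV. Gi j i * G j k)) + (\<Sum>i\<in>UNIV. \<beta> i * (\<Sum>j\<in>UNIV. Gi j i * u j)) * u k
      + b * (\<Sum>i\<in>UNIV. \<Sum>j\<in>UNIV. Gi j i * C i j) * u k + b * (\<Sum>i\<in>UNIV. (\<Sum>j\<in>UNIV. Gi j i * u j) * C i k)"
    by (simp add: algebra_simps sum.distrib sum_distrib_left sum_distrib_right)
  also have "\<dots> = \<alpha> k + (\<Sum>i\<in>UNIV. v i * \<beta> i) * u k + b * (\<Sum>i\<in>UNIV. \<Sum>j\<in>UNIV. Gi j i * C i j) * u k"
    by (simp only: Gi_G Gi_u acc) (simp add: mult.commute if_distrib cong: if_cong)
  finally show ?thesis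
    using div by (simp add: algebra_simps)
qed

lemma killing_condition_contracted_once:
  fixes G C :: "'n::finite \<Rightarrow> 'n \<Rightarrow> real" and u v \<phi> \<beta> :: "'n \<Rightarrow> real" and b :: real
  assumes vG: "\<And>l. (\<Sum>j\<in>UNIV. v j * G j l) = u l"
    and G_sym: "\<And>i j. G i j = G j i"
    and norm: "(\<Sum>k\<in>UNIV. v k * u k) = -1"
    and acc: "\<And>j. (\<Sum>k\<in>UNIV. v k * C k j) = 0"
    and orth: "\<And>i. (\<Sum>k\<in>UNIV. v k * C i k) = 0"
    and cyclic: "\<And>i j l.
      (\<phi> i * G j l + \<beta> i * u j * u l + b * (C i j * u l + u j * C i l)) +
      (\<phi> j * G l i + \<beta> j * u l * u i + b * (C j l * u i + u l * C j i)) +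
      (\<phi> l * G i j + \<beta> l * u i * u j + b * (C l i * u j + u i * C l j)) = 0"
  shows "(\<Sum>i\<in>UNIV. v i * \<phi> i) * G j l + (\<Sum>i\<in>UNIV. v i * \<beta> i) * u j * u l
      + (\<phi> j - \<beta> j) * u l + (\<phi> l - \<beta> l) * u j - b * (C j l + C l j) = 0"
proof -
  have vG': "(\<Sum>i\<in>UNIV. v i * G l i) = u l" for l
    using vG[of l] by (simp add: G_sym)
  have "(\<Sum>i\<in>UNIV. v i * (
    (\<phi> i * G j l + \<beta> i * u j * u l + b * (C i j * u l + u j * C i l)) +
    (\<phi> j * G l i + \<beta> j * u l * u i + b * (C j l * u i + u l * C j i)) +
    (\<phi> l * G i j + \<beta> l * u i * u j + b * (C l i * u j + u i * C l j))))
    = (\<Sum>i\<in>UNIV. v i * \<phi> i) * G j l + (\<Sum>i\<in>UNIV. v i * \<beta> i) * u j * u l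
    + b * ((\<Sum>i\<in>UNIV. v i * C i j) * u l + u j * (\<Sum>i\<in>UNIV. v i * C i l))
    + \<phi> j * (\<Sum>i\<in>UNIV. v i * G l i) + \<beta> j * u l * (\<Sum>i\<in>UNIV. v i * u i)
    + b * (C j l * (\<Sum>i\<in>UNIV. v i * u i) + u l * (\<Sum>i\<in>UNIV. v i * C j i))
    + \<phi> l * (\<Sum>i\<in>UNIV. v i * G i j) + \<beta> l * (\<Sum>i\<in>UNIV. v i * u i) * u j
    + b * ((\<Sum>i\<in>UNIV. v i * C l i) * u j + (\<Sum>i\<in>UNIV. v i * u i) * C l j)"
    by (simp add: algebra_simps sum.distrib sum_distrib_left sum_distrib_right)
  then show ?thesis
    by (simp only: cyclic acc orth norm vG vG' mult_zero_right sum.neutral_const) (simp add: algebra_simps)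
qed

lemma killing_condition_contraction:
  fixes G C :: "'n::finite \<Rightarrow> 'n \<Rightarrow> real" and u v \<phi> \<beta> :: "'n \<Rightarrow> real" and b :: real
  assumes vG: "\<And>l. (\<Sum>j\<in>UNIV. v j * G j l) = u l"
    and G_sym: "\<And>i j. G i j = G j i"
    and norm: "(\<Sum>k\<in>UNIV. v k * u k) = -1"
    and acc: "\<And>j. (\<Sum>k\<in>UNIV. v k * C k j) = 0"
    and orth: "\<And>i. (\<Sum>k\<in>UNIV. v k * C i k) = 0"
    and cyclic: "\<And>i j l.
      (\<phi> i * G j l + \<beta> i * u j * u l + b * (C i j * u l + u j * C i l)) +
      (\<phi> j * G l i + \<beta> j * u l * u i + b * (C j l * u i + u l * C j i)) +
      (\<phi> l * G i j + \<beta> l * u i * u j + b * (C l i * u j + u i * C l j)) = 0"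
  shows "\<phi> l = \<beta> l"
    and "b * (C j l + C l j) = (\<Sum>m\<in>UNIV. v m * \<beta> m) * (G j l + u j * u l)"
proof -
  define pv where "pv = (\<Sum>i\<in>UNIV. v i * \<phi> i)"
  define bv where "bv = (\<Sum>i\<in>UNIV. v i * \<beta> i)"
  have once: "pv * G j l + bv * u j * u l + (\<phi> j - \<beta> j) * u l + (\<phi> l - \<beta> l) * u j
         - b * (C j l + C l j) = 0" for j l
    unfolding pv_def bv_def by (rule killing_condition_contracted_once[OF vG G_sym norm acc orth cyclic])
  have twice: "2 * (pv - bv) * u l - (\<phi> l - \<beta> l) = 0" for l
  proof -
    have "(\<Sum>j\<in>UNIV. v j * (pv * G j l + bv * u j * u l + (\<phi> j - \<beta> j) * u l + (\<phi> l - \<beta> l) * u j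
         - b * (C j l + C l j)))
      = pv * (\<Sum>j\<in>UNIV. v j * G j l) + bv * (\<Sum>j\<in>UNIV. v j * u j) * u l + (pv - bv) * u l
        + (\<phi> l - \<beta> l) * (\<Sum>j\<in>UNIV. v j * u j)
        - b * ((\<Sum>j\<in>UNIV. v j * C j l) + (\<Sum>j\<in>UNIV. v j * C l j))"
      unfolding pv_def bv_def
      by (simp add: algebra_simps sum.distrib sum_distrib_left sum_distrib_right sum_subtractf)
    then show ?thesis
      by (simp only: once acc orth norm vG mult_zero_right sum.neutral_const) (simp add: algebra_simps)
  qed
  have "(\<Sum>l\<in>UNIV. v l * (2 * (pv - bv) * u l - (\<phi> l - \<beta> l))) = 0"
    by (simp only: twice mult_zero_right sum.neutral_const)
  moreover have "(\<Sum>l\<in>UNIV. v l * (2 * (pv - bv) * u l - (\<phi> l - \<beta> l)))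
     = 2 * (pv - bv) * (\<Sum>l\<in>UNIV. v l * u l) - ((\<Sum>l\<in>UNIV. v l * \<phi> l) - (\<Sum>l\<in>UNIV. v l * \<beta> l))"
    by (simp add: algebra_simps sum.distrib sum_distrib_left sum_subtractf)
  ultimately have "pv = bv"
    using norm unfolding pv_def[symmetric] bv_def[symmetric] by simp
  then show \<phi>\<beta>: "\<phi> l = \<beta> l" for l
    using twice[of l] by simp
  show "b * (C j l + C l j) = (\<Sum>m\<in>UNIV. v m * \<beta> m) * (G j l + u j * u l)"
    using once[of j l] \<open>pv = bv\<close> \<phi>\<beta> unfolding bv_def[symmetric] by (simp add: algebra_simps)
qed

lemma killing_condition_algebra:
  fixes G C :: "'n::finite \<Rightarrow> 'n \<Rightarrow> real" and u v \<alpha> \<beta> :: "'n \<Rightarrow> real" and b n s :: real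
  assumes vG: "\<And>l. (\<Sum>j\<in>UNIV. v j * G j l) = u l"
    and G_sym: "\<And>i j. G i j = G j i"
    and norm: "(\<Sum>k\<in>UNIV. v k * u k) = -1"
    and acc: "\<And>j. (\<Sum>k\<in>UNIV. v k * C k j) = 0"
    and orth: "\<And>i. (\<Sum>k\<in>UNIV. v k * C i k) = 0"
    and \<alpha>: "\<And>k. \<alpha> k = s * u k"
    and n: "n \<ge> 0"
    and killing: "\<And>i j l.
      (\<alpha> i * G j l + \<beta> i * u j * u l + b * (C i j * u l + u j * C i l)) +
      (\<alpha> j * G l i + \<beta> j * u l * u i + b * (C j l * u i + u l * C j i)) +
      (\<alpha> l * G i j + \<beta> l * u i * u j + b * (C l i * u j + u i * C l j))
      = (n * \<alpha> i - \<beta> i) / (n + 2) * G j l + (n * \<alpha> j - \<beta> j) / (n + 2) * G l i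
        + (n * \<alpha> l - \<beta> l) / (n + 2) * G i j"
  shows "\<beta> k = - (\<Sum>m\<in>UNIV. v m * \<beta> m) * u k"
    and "b * (C j l + C l j) = (\<Sum>m\<in>UNIV. v m * \<beta> m) * (G j l + u j * u l)"
proof -
  define \<phi> where "\<phi> a = \<alpha> a - (n * \<alpha> a - \<beta> a) / (n + 2)" for a
  have "(\<phi> i * G j l + \<beta> i * u j * u l + b * (C i j * u l + u j * C i l)) +
      (\<phi> j * G l i + \<beta> j * u l * u i + b * (C j l * u i + u l * C j i)) +
      (\<phi> l * G i j + \<beta> l * u i * u j + b * (C l i * u j + u i * C l j)) = 0" for i j l
    using killing[of i j l] unfolding \<phi>_def by (simp add: algebra_simps)
  note contraction = killing_condition_contraction[OF vG G_sym norm acc orth this]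
  have \<beta>: "\<beta> a = 2 * s / (n + 1) * u a" for a
  proof -
    have "(n + 2) * \<alpha> a - (n * \<alpha> a - \<beta> a) = (n + 2) * \<beta> a"
      using contraction(1)[of a] n unfolding \<phi>_def by (simp add: field_simps)
    then show ?thesis
      using n \<alpha>[of a] by (simp add: field_simps)
  qed
  have "(\<Sum>m\<in>UNIV. v m * \<beta> m) = 2 * s / (n + 1) * (\<Sum>m\<in>UNIV. v m * u m)"
    unfolding \<beta> by (simp add: sum_distrib_left mult.left_commute)
  then show "\<beta> k = - (\<Sum>m\<in>UNIV. v m * \<beta> m) * u k"
    using \<beta>[of k] norm by simp
  show "b * (C j l + C l j) = (\<Sum>m\<in>UNIV. v m * \<beta> m) * (G j l + u j * u l)"
    by (rule contraction(2))
qed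

lemma hessian_symmetry_algebra:
  fixes C :: "'n::finite \<Rightarrow> 'n \<Rightarrow> real" and u v E :: "'n \<Rightarrow> real" and D :: real
  assumes norm: "(\<Sum>k\<in>UNIV. v k * u k) = -1"
    and acc: "\<And>j. (\<Sum>k\<in>UNIV. v k * C k j) = 0"
    and orth: "\<And>i. (\<Sum>k\<in>UNIV. v k * C i k) = 0"
    and sym: "\<And>i j. E i * u j + D * C i j = E j * u i + D * C j i"
    and D: "D \<noteq> 0"
  shows "E i = - (\<Sum>k\<in>UNIV. v k * E k) * u i" and "C i j = C j i"
proof -
  have E: "E i = - (\<Sum>k\<in>UNIV. v k * E k) * u i" for i
  proof -
    have "(\<Sum>j\<in>UNIV. v j * (E i * u j + D * C i j)) = (\<Sum>j\<in>UNIV. v j * (E j * u i + D * C j i))"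
      using sym by simp
    moreover have "(\<Sum>j\<in>UNIV. v j * (E i * u j + D * C i j))
        = E i * (\<Sum>j\<in>UNIV. v j * u j) + D * (\<Sum>j\<in>UNIV. v j * C i j)"
      by (simp add: algebra_simps sum.distrib sum_distrib_left)
    moreover have "(\<Sum>j\<in>UNIV. v j * (E j * u i + D * C j i))
        = (\<Sum>j\<in>UNIV. v j * E j) * u i + D * (\<Sum>j\<in>UNIV. v j * C j i)"
      by (simp add: algebra_simps sum.distrib sum_distrib_left sum_distrib_right)
    ultimately show ?thesis
      using norm acc orth by simp
  qed
  then show "E i = - (\<Sum>k\<in>UNIV. v k * E k) * u i" .
  show "C i j = C j i"
    using sym[of i j] E[of i] E[of j] D by (simp add: algebra_simps)
qed

section \<open>The geometric setting\<close>

locale conformal_killing_fluid =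
  fixes U :: "(real^'n::finite) set"
    and g :: "real^'n \<Rightarrow> real^'n^'n"
    and A B :: "real^'n \<Rightarrow> real"
    and u :: "real^'n \<Rightarrow> real^'n"
  assumes open_U: "open U"
    and metric: "lorentzian_metric U g"
    and smooth_A: "smooth_on U A" and smooth_B: "smooth_on U B"
    and smooth_u: "\<forall>k. smooth_on U (\<lambda>x. u x $ k)"
    and unit_u: "\<forall>x\<in>U. (\<Sum>i\<in>UNIV. \<Sum>j\<in>UNIV. ginv g x i j * u x $ i * u x $ j) = -1"
    and B_nonzero: "\<forall>x\<in>U. B x \<noteq> 0"
    and killing: "conformal_killing U g (\<lambda>x i j. A x * g x $ i $ j + B x * u x $ i * u x $ j)"
    and div_free: "divergence_free U g (\<lambda>x i j. A x * g x $ i $ j + B x * u x $ i * u x $ j)"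
    and geodesic: "\<forall>x\<in>U. \<forall>j. accel g u j x = 0"
    and dot_B_nonzero: "\<forall>x\<in>U. dotd g u B x \<noteq> 0"
begin

lemma metric_sym: "y \<in> U \<Longrightarrow> g y $ i $ j = g y $ j $ i"
  using arg_cong[OF lorentzian_metric_symmetric[OF metric], of y "\<lambda>M. M $ j $ i"]
  by (simp add: transpose_def)

lemma ginv_sym: "y \<in> U \<Longrightarrow> ginv g y i j = ginv g y j i"
  using arg_cong[OF transpose_matrix_inv_symmetric, of "g y" "\<lambda>M. M $ j $ i"]
    lorentzian_metric_det_nonzero[OF metric] lorentzian_metric_symmetric[OF metric]
  by (simp add: transpose_def ginv_def)

lemma ginv_metric_delta: "y \<in> U \<Longrightarrow> (\<Sum>j\<in>UNIV. ginv g y i j * g y $ j $ k) = (if i = k then 1 else 0)"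
  using arg_cong[OF matrix_inv_det_nonzero(2)[OF lorentzian_metric_det_nonzero[OF metric]],
      of y "\<lambda>M. M $ i $ k"]
  unfolding ginv_def matrix_matrix_mult_def mat_def by simp

lemma ginv_metric_delta': "y \<in> U \<Longrightarrow> (\<Sum>j\<in>UNIV. ginv g y j i * g y $ j $ k) = (if i = k then 1 else 0)"
  using ginv_metric_delta[of y i k] by (simp add: ginv_sym[of y _ i])

lemma metric_differentiable: "y \<in> U \<Longrightarrow> (\<lambda>z. g z $ i $ j) differentiable (at y)"
  using metric smooth_on_differentiable unfolding lorentzian_metric_def by blast

lemma u_differentiable: "y \<in> U \<Longrightarrow> (\<lambda>z. u z $ i) differentiable (at y)"
  using smooth_u smooth_on_differentiable by blast

lemma raise_differentiable: "y \<in> U \<Longrightarrow> (\<lambda>z. raise g u k z) differentiable (at y)"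
  unfolding raise_def
  by (intro differentiable_sum ballI differentiable_mult u_differentiable
      ginv_differentiable[OF open_U metric]) simp_all

lemma raise_metric: "y \<in> U \<Longrightarrow> (\<Sum>j\<in>UNIV. raise g u j y * g y $ j $ l) = u y $ l"
proof -
  assume y: "y \<in> U"
  have "(\<Sum>j\<in>UNIV. raise g u j y * g y $ j $ l)
      = (\<Sum>j\<in>UNIV. \<Sum>m\<in>UNIV. u y $ m * (ginv g y j m * g y $ j $ l))"
    unfolding raise_def by (simp add: sum_distrib_right sum_distrib_left algebra_simps)
  also have "\<dots> = (\<Sum>m\<in>UNIV. u y $ m * (\<Sum>j\<in>UNIV. ginv g y j m * g y $ j $ l))"
    by (subst sum.swap) (simp add: sum_distrib_left)
  also have "\<dots> = u y $ l"
    by (simp add: ginv_metric_delta'[OF y] if_distrib cong: if_cong)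
  finally show ?thesis .
qed

lemma raise_metric': "y \<in> U \<Longrightarrow> (\<Sum>j\<in>UNIV. raise g u j y * g y $ l $ j) = u y $ l"
  using raise_metric[of y l] metric_sym[of y] by simp

lemma raise_velocity: "y \<in> U \<Longrightarrow> (\<Sum>k\<in>UNIV. raise g u k y * u y $ k) = -1"
proof -
  assume y: "y \<in> U"
  have "(\<Sum>k\<in>UNIV. raise g u k y * u y $ k) = (\<Sum>i\<in>UNIV. \<Sum>j\<in>UNIV. ginv g y i j * u y $ i * u y $ j)"
    unfolding raise_def by (simp add: sum_distrib_right sum_distrib_left algebra_simps)
  then show ?thesis
    using unit_u y by simp
qed

lemma pd_metric_sym: "y \<in> U \<Longrightarrow> pd a (\<lambda>z. g z $ b $ c) y = pd a (\<lambda>z. g z $ c $ b) y"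
  by (rule pd_cong[OF open_U]) (auto intro: metric_sym)

lemma christoffel_sym: "y \<in> U \<Longrightarrow> christoffel g k i j y = christoffel g k j i y"
  unfolding christoffel_def by (simp add: pd_metric_sym[of y _ i j] algebra_simps)

lemma christoffel_lower:
  assumes y: "y \<in> U"
  shows "(\<Sum>m\<in>UNIV. christoffel g m a b y * g y $ m $ c)
     = (1/2) * (pd a (\<lambda>z. g z $ b $ c) y + pd b (\<lambda>z. g z $ a $ c) y - pd c (\<lambda>z. g z $ a $ b) y)"
proof -
  define X where "X l = pd a (\<lambda>z. g z $ b $ l) y + pd b (\<lambda>z. g z $ a $ l) y - pd l (\<lambda>z. g z $ a $ b) y" for l
  have "(\<Sum>m\<in>UNIV. christoffel g m a b y * g y $ m $ c)
      = (\<Sum>m\<in>UNIV. \<Sum>l\<in>UNIV. (1/2) * X l * (ginv g y l m * g y $ m $ c))"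
    unfolding christoffel_def X_def[symmetric]
    by (simp add: sum_distrib_right sum_distrib_left algebra_simps ginv_sym[OF y])
  also have "\<dots> = (\<Sum>l\<in>UNIV. (1/2) * X l * (\<Sum>m\<in>UNIV. ginv g y l m * g y $ m $ c))"
    by (subst sum.swap) (simp add: sum_distrib_left)
  also have "\<dots> = (1/2) * X c"
    by (simp add: ginv_metric_delta[OF y] if_distrib cong: if_cong)
  finally show ?thesis
    unfolding X_def .
qed

lemma pd_metric_christoffel:
  assumes y: "y \<in> U"
  shows "pd a (\<lambda>z. g z $ b $ c) y
     = (\<Sum>m\<in>UNIV. christoffel g m a b y * g y $ m $ c) + (\<Sum>m\<in>UNIV. christoffel g m a c y * g y $ b $ m)"
  using christoffel_lower[OF y, of a b c] christoffel_lower[OF y, of a c b] pd_metric_sym[OF y, of a c b]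
  by (simp add: metric_sym[OF y, of b] algebra_simps)

abbreviation K :: "real^'n \<Rightarrow> 'n \<Rightarrow> 'n \<Rightarrow> real" where
  "K \<equiv> \<lambda>x i j. A x * g x $ i $ j + B x * u x $ i * u x $ j"

lemma pd_K:
  assumes y: "y \<in> U"
  shows "pd a (\<lambda>z. K z b c) y
    = A y * pd a (\<lambda>z. g z $ b $ c) y + pd a A y * g y $ b $ c
      + (B y * u y $ b) * pd a (\<lambda>z. u z $ c) y + (B y * pd a (\<lambda>z. u z $ b) y + pd a B y * u y $ b) * u y $ c"
proof -
  note d = smooth_on_differentiable[OF smooth_A y] smooth_on_differentiable[OF smooth_B y]
    metric_differentiable[OF y] u_differentiable[OF y]
  have "pd a (\<lambda>z. K z b c) y = pd a (\<lambda>z. A z * g z $ b $ c) y + pd a (\<lambda>z. B z * u z $ b * u z $ c) y"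
    by (rule pd_add) (intro differentiable_mult d)+
  also have "pd a (\<lambda>z. A z * g z $ b $ c) y = A y * pd a (\<lambda>z. g z $ b $ c) y + pd a A y * g y $ b $ c"
    by (rule pd_mult) (intro d)+
  also have "pd a (\<lambda>z. B z * u z $ b * u z $ c) y
      = (B y * u y $ b) * pd a (\<lambda>z. u z $ c) y + pd a (\<lambda>z. B z * u z $ b) y * u y $ c"
    by (rule pd_mult) (intro differentiable_mult d)+
  also have "pd a (\<lambda>z. B z * u z $ b) y = B y * pd a (\<lambda>z. u z $ b) y + pd a B y * u y $ b"
    by (rule pd_mult) (intro d)+
  finally show ?thesis
    by (simp only: add.assoc)
qed

lemma cov2_K:
  assumes "y \<in> U"
  shows "cov2 g K a b c y
    = pd a A y * g y $ b $ c + pd a B y * u y $ b * u y $ c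
      + B y * (cov1 g u a b y * u y $ c + u y $ b * cov1 g u a c y)"
  unfolding cov2_def cov1_def pd_K[OF assms] pd_metric_christoffel[OF assms]
  by (simp add: algebra_simps sum.distrib sum_distrib_left sum_distrib_right sum_subtractf)

lemma trace2_K: "y \<in> U \<Longrightarrow> trace2 g K y = real CARD('n) * A y - B y"
proof -
  assume y: "y \<in> U"
  have "trace2 g K y = A y * (\<Sum>i\<in>UNIV. \<Sum>j\<in>UNIV. ginv g y i j * g y $ j $ i)
       + B y * (\<Sum>i\<in>UNIV. \<Sum>j\<in>UNIV. ginv g y i j * u y $ i * u y $ j)"
    unfolding trace2_def by (simp add: algebra_simps sum.distrib sum_distrib_left metric_sym[OF y])
  then show ?thesis
    using unit_u y by (simp add: ginv_metric_delta[OF y])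
qed

lemma eta_K: "y \<in> U \<Longrightarrow> eta g K i y = (real CARD('n) * pd i A y - pd i B y) / (real CARD('n) + 2)"
proof -
  assume y: "y \<in> U"
  have "pd i (trace2 g K) y = pd i (\<lambda>z. real CARD('n) * A z - B z) y"
    by (rule pd_cong[OF open_U y]) (rule trace2_K)
  also have "\<dots> = real CARD('n) * pd i A y - pd i B y"
    using smooth_on_differentiable[OF smooth_A y] smooth_on_differentiable[OF smooth_B y]
    by (simp add: pd_diff pd_cmult)
  finally have trace: "pd i (trace2 g K) y = real CARD('n) * pd i A y - pd i B y" .
  have "(\<Sum>j\<in>UNIV. \<Sum>m\<in>UNIV. ginv g y j m * cov2 g K j m i y)
      = (\<Sum>m\<in>UNIV. \<Sum>j\<in>UNIV. ginv g y m j * cov2 g K j m i y)"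
    by (subst sum.swap) (simp add: ginv_sym[OF y])
  also have "\<dots> = 0"
    using div_free y unfolding divergence_free_def by blast
  finally show ?thesis
    unfolding eta_def trace by simp
qed

lemma pd_velocity_contraction:
  assumes y: "y \<in> U"
  shows "2 * (\<Sum>k\<in>UNIV. raise g u k y * pd a (\<lambda>z. u z $ k) y)
    = (\<Sum>k\<in>UNIV. \<Sum>l\<in>UNIV. pd a (\<lambda>z. g z $ k $ l) y * raise g u k y * raise g u l y)"
proof -
  define v where "v k = raise g u k y" for k
  define dv where "dv k = pd a (\<lambda>z. raise g u k z) y" for k
  define du where "du k = pd a (\<lambda>z. u z $ k) y" for k
  define dG where "dG k l = pd a (\<lambda>z. g z $ k $ l) y" for k l
  note d = raise_differentiable[OF y] u_differentiable[OF y] metric_differentiable[OF y]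
  have "(\<Sum>k\<in>UNIV. v k * du k + dv k * u y $ k) = (\<Sum>k\<in>UNIV. pd a (\<lambda>z. raise g u k z * u z $ k) y)"
    unfolding v_def du_def dv_def by (intro sum.cong refl pd_mult[symmetric] d)
  also have "\<dots> = pd a (\<lambda>z. \<Sum>k\<in>UNIV. raise g u k z * u z $ k) y"
    by (rule pd_sum[symmetric]) (auto intro: differentiable_mult d)
  also have "\<dots> = pd a (\<lambda>z. -1) y"
    by (rule pd_cong[OF open_U y]) (rule raise_velocity)
  finally have dv_u: "(\<Sum>k\<in>UNIV. dv k * u y $ k) = - (\<Sum>k\<in>UNIV. v k * du k)"
    by (simp add: pd_const sum.distrib eq_neg_iff_add_eq_0 add.commute)
  have du: "du l = (\<Sum>k\<in>UNIV. v k * dG k l + dv k * g y $ k $ l)" for l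
  proof -
    have "du l = pd a (\<lambda>z. \<Sum>k\<in>UNIV. raise g u k z * g z $ k $ l) y"
      unfolding du_def by (rule pd_cong[OF open_U y]) (simp add: raise_metric)
    also have "\<dots> = (\<Sum>k\<in>UNIV. pd a (\<lambda>z. raise g u k z * g z $ k $ l) y)"
      by (rule pd_sum) (auto intro: differentiable_mult d)
    also have "\<dots> = (\<Sum>k\<in>UNIV. v k * dG k l + dv k * g y $ k $ l)"
      unfolding v_def dG_def dv_def by (intro sum.cong refl pd_mult d)
    finally show ?thesis .
  qed
  have "(\<Sum>l\<in>UNIV. v l * du l)
      = (\<Sum>l\<in>UNIV. \<Sum>k\<in>UNIV. dG k l * v k * v l) + (\<Sum>l\<in>UNIV. \<Sum>k\<in>UNIV. dv k * (v l * g y $ k $ l))"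
    unfolding du by (simp add: sum.distrib sum_distrib_left algebra_simps)
  also have "(\<Sum>l\<in>UNIV. \<Sum>k\<in>UNIV. dG k l * v k * v l) = (\<Sum>k\<in>UNIV. \<Sum>l\<in>UNIV. dG k l * v k * v l)"
    by (rule sum.swap)
  also have "(\<Sum>l\<in>UNIV. \<Sum>k\<in>UNIV. dv k * (v l * g y $ k $ l)) = (\<Sum>k\<in>UNIV. dv k * (\<Sum>l\<in>UNIV. v l * g y $ k $ l))"
    by (subst sum.swap) (simp add: sum_distrib_left)
  also have "\<dots> = - (\<Sum>l\<in>UNIV. v l * du l)"
    unfolding v_def raise_metric'[OF y] by (simp add: dv_u[unfolded v_def] mult.commute)
  finally show ?thesis
    unfolding v_def du_def dG_def by simp
qed

lemma christoffel_velocity_contraction: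
  assumes y: "y \<in> U"
  shows "2 * (\<Sum>k\<in>UNIV. raise g u k y * (\<Sum>l\<in>UNIV. christoffel g l a k y * u y $ l))
    = (\<Sum>k\<in>UNIV. \<Sum>m\<in>UNIV. pd a (\<lambda>z. g z $ k $ m) y * raise g u k y * raise g u m y)"
proof -
  define v where "v k = raise g u k y" for k
  define S where "S k m = pd k (\<lambda>z. g z $ a $ m) y" for k m
  have lowered: "(\<Sum>l\<in>UNIV. christoffel g l a k y * u y $ l)
      = (\<Sum>m\<in>UNIV. v m * ((1/2) * (pd a (\<lambda>z. g z $ k $ m) y + S k m - S m k)))" for k
  proof -
    have "(\<Sum>l\<in>UNIV. christoffel g l a k y * u y $ l)
        = (\<Sum>m\<in>UNIV. v m * (\<Sum>l\<in>UNIV. christoffel g l a k y * g y $ l $ m))"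
      unfolding raise_metric'[OF y, symmetric] v_def
      by (simp add: sum_distrib_left sum_distrib_right algebra_simps) (subst sum.swap, simp)
    then show ?thesis
      unfolding S_def christoffel_lower[OF y] .
  qed
  have "2 * (\<Sum>k\<in>UNIV. v k * (\<Sum>l\<in>UNIV. christoffel g l a k y * u y $ l))
      = (\<Sum>k\<in>UNIV. \<Sum>m\<in>UNIV. pd a (\<lambda>z. g z $ k $ m) y * v k * v m)
        + ((\<Sum>k\<in>UNIV. \<Sum>m\<in>UNIV. v k * v m * S k m) - (\<Sum>k\<in>UNIV. \<Sum>m\<in>UNIV. v k * v m * S m k))"
    unfolding lowered by (simp add: algebra_simps sum.distrib sum_distrib_left sum_subtractf)
  moreover have "(\<Sum>k\<in>UNIV. \<Sum>m\<in>UNIV. v k * v m * S k m) = (\<Sum>k\<in>UNIV. \<Sum>m\<in>UNIV. v k * v m * S m k)"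
    by (subst sum.swap) (simp add: mult.commute)
  ultimately show ?thesis
    unfolding v_def by simp
qed

lemma raise_cov1_geodesic: "y \<in> U \<Longrightarrow> (\<Sum>k\<in>UNIV. raise g u k y * cov1 g u k j y) = 0"
  using geodesic unfolding accel_def by blast

lemma raise_cov1_velocity: "y \<in> U \<Longrightarrow> (\<Sum>k\<in>UNIV. raise g u k y * cov1 g u a k y) = 0"
  using pd_velocity_contraction[of y a] christoffel_velocity_contraction[of y a]
  unfolding cov1_def by (simp add: algebra_simps sum_subtractf)

lemma pd_A_parallel:
  assumes y: "y \<in> U"
  shows "pd k A y = - ((\<Sum>i\<in>UNIV. raise g u i y * pd i B y)
     + B y * (\<Sum>i\<in>UNIV. \<Sum>j\<in>UNIV. ginv g y j i * cov1 g u i j y)) * u y $ k"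
proof (rule divergence_condition_algebra[where G = "\<lambda>a b. g y $ a $ b" and u = "\<lambda>a. u y $ a"])
  show "(\<Sum>j\<in>UNIV. ginv g y j i * g y $ j $ k) = (if i = k then 1 else 0)" for i k
    by (rule ginv_metric_delta'[OF y])
  show "(\<Sum>j\<in>UNIV. ginv g y j i * u y $ j) = raise g u i y" for i
    unfolding raise_def by (simp add: ginv_sym[OF y, of _ i])
  show "(\<Sum>i\<in>UNIV. raise g u i y * cov1 g u i k y) = 0" for k
    by (rule raise_cov1_geodesic[OF y])
  have "(\<Sum>j\<in>UNIV. \<Sum>i\<in>UNIV. ginv g y j i * cov2 g K i j k y) = 0"
    using div_free y unfolding divergence_free_def by blast
  then show "(\<Sum>i\<in>UNIV. \<Sum>j\<in>UNIV. ginv g y j i * (pd i A y * g y $ j $ k + pd i B y * u y $ j * u y $ k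
       + B y * (cov1 g u i j y * u y $ k + u y $ j * cov1 g u i k y))) = 0"
    by (subst sum.swap) (simp add: cov2_K[OF y])
qed

lemma pd_B_and_symmetrised_cov1:
  assumes y: "y \<in> U"
  shows "pd k B y = - dotd g u B y * u y $ k"
    and "B y * (cov1 g u j l y + cov1 g u l j y) = dotd g u B y * (g y $ j $ l + u y $ j * u y $ l)"
proof -
  let ?n = "real CARD('n)"
  have "(pd i A y * g y $ j $ l + pd i B y * u y $ j * u y $ l
         + B y * (cov1 g u i j y * u y $ l + u y $ j * cov1 g u i l y)) +
      (pd j A y * g y $ l $ i + pd j B y * u y $ l * u y $ i
         + B y * (cov1 g u j l y * u y $ i + u y $ l * cov1 g u j i y)) +
      (pd l A y * g y $ i $ j + pd l B y * u y $ i * u y $ j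
         + B y * (cov1 g u l i y * u y $ j + u y $ i * cov1 g u l j y))
      = (?n * pd i A y - pd i B y) / (?n + 2) * g y $ j $ l
        + (?n * pd j A y - pd j B y) / (?n + 2) * g y $ l $ i
        + (?n * pd l A y - pd l B y) / (?n + 2) * g y $ i $ j" for i j l
  proof -
    have "cov2 g K i j l y + cov2 g K j l i y + cov2 g K l i j y
        = eta g K i y * g y $ j $ l + eta g K j y * g y $ l $ i + eta g K l y * g y $ i $ j"
      using killing y unfolding conformal_killing_def by blast
    then show ?thesis
      unfolding cov2_K[OF y] eta_K[OF y] .
  qed
  from killing_condition_algebra[where G = "\<lambda>a b. g y $ a $ b" and C = "\<lambda>a b. cov1 g u a b y"
      and u = "\<lambda>a. u y $ a" and v = "\<lambda>a. raise g u a y" and \<alpha> = "\<lambda>a. pd a A y" and \<beta> = "\<lambda>a. pd a B y",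
      OF raise_metric[OF y] metric_sym[OF y] raise_velocity[OF y] raise_cov1_geodesic[OF y]
      raise_cov1_velocity[OF y] pd_A_parallel[OF y] of_nat_0_le_iff this]
  show "pd k B y = - dotd g u B y * u y $ k"
    and "B y * (cov1 g u j l y + cov1 g u l j y) = dotd g u B y * (g y $ j $ l + u y $ j * u y $ l)"
    unfolding dotd_def by blast+
qed

lemma dot_B_differentiable: "y \<in> U \<Longrightarrow> dotd g u B differentiable (at y)"
  unfolding dotd_def
  by (intro differentiable_sum ballI differentiable_mult raise_differentiable
      smooth_on_differentiable[OF smooth_on_pd[OF smooth_B]]) simp_all

lemma hessian_B:
  assumes x: "x \<in> U"
  shows "pd i (pd j B) x = - dotd g u B x * pd i (\<lambda>z. u z $ j) x - pd i (dotd g u B) x * u x $ j"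
proof -
  have "pd i (pd j B) x = pd i (\<lambda>z. - dotd g u B z * u z $ j) x"
    by (rule pd_cong[OF open_U x]) (rule pd_B_and_symmetrised_cov1(1))
  also have "\<dots> = - dotd g u B x * pd i (\<lambda>z. u z $ j) x + pd i (\<lambda>z. - dotd g u B z) x * u x $ j"
    by (intro pd_mult differentiable_minus dot_B_differentiable u_differentiable x)
  finally show ?thesis
    by (simp add: pd_minus[OF dot_B_differentiable[OF x]])
qed

text \<open>Differentiating \<open>\<partial>\<^sub>j B = -Bdot u\<^sub>j\<close> once more, the Christoffel terms drop out of the
  symmetry of the Hessian since \<open>\<Gamma>\<close> is symmetric.\<close>

lemma cov1_sym_and_pd_dot_B:
  assumes x: "x \<in> U"
  shows "cov1 g u i j x = cov1 g u j i x"
    and "pd i (dotd g u B) x = - dotd g u (dotd g u B) x * u x $ i"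
proof -
  have "pd j (pd i B) x = pd i (pd j B) x" for i j
  proof (rule pd_pd_commute[OF open_U x])
    show "\<forall>y\<in>U. B differentiable (at y)"
      using smooth_on_differentiable[OF smooth_B] by blast
    show "\<forall>y\<in>U. pd i B differentiable (at y)" "\<forall>y\<in>U. pd j B differentiable (at y)"
      using smooth_on_differentiable[OF smooth_on_pd[OF smooth_B]] by blast+
    show "continuous (at x) (pd j (pd i B))" "continuous (at x) (pd i (pd j B))"
      using smooth_on_differentiable[OF smooth_on_pd[OF smooth_on_pd[OF smooth_B]] x]
      by (blast intro: differentiable_imp_continuous_within)+
  qed
  then have "pd i (dotd g u B) x * u x $ j + dotd g u B x * cov1 g u i j x
      = pd j (dotd g u B) x * u x $ i + dotd g u B x * cov1 g u j i x" for i j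
    unfolding hessian_B[OF x] cov1_def by (simp add: christoffel_sym[OF x, of _ i j] algebra_simps)
  from hessian_symmetry_algebra[where u = "\<lambda>a. u x $ a" and v = "\<lambda>a. raise g u a x",
      OF raise_velocity[OF x] raise_cov1_geodesic[OF x] raise_cov1_velocity[OF x] this] dot_B_nonzero x
  show "cov1 g u i j x = cov1 g u j i x" and "pd i (dotd g u B) x = - dotd g u (dotd g u B) x * u x $ i"
    unfolding dotd_def[of g u "dotd g u B"] by blast+
qed

abbreviation H :: "real^'n \<Rightarrow> real" where
  "H \<equiv> \<lambda>x. dotd g u B x / (2 * B x)"

lemma cov1_u_eq: "x \<in> U \<Longrightarrow> cov1 g u j k x = H x * (g x $ j $ k + u x $ j * u x $ k)"
  using pd_B_and_symmetrised_cov1(2)[of x j k] cov1_sym_and_pd_dot_B(1)[of x k j] B_nonzero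
  by (auto simp: field_simps)

lemma pd_H_parallel: "x \<in> U \<Longrightarrow> \<exists>c. \<forall>k. pd k H x = c * u x $ k"
proof -
  assume x: "x \<in> U"
  let ?D = "dotd g u B"
  have "pd k H x = (pd k ?D x * (2 * B x) - ?D x * pd k (\<lambda>z. 2 * B z) x) / (2 * B x * (2 * B x))" for k
    using B_nonzero x
    by (intro pd_divide dot_B_differentiable differentiable_mult smooth_on_differentiable[OF smooth_B]) simp_all
  moreover have "pd k (\<lambda>z. 2 * B z) x = 2 * pd k B x" for k
    by (rule pd_cmult[OF smooth_on_differentiable[OF smooth_B x]])
  ultimately have "pd k H x
      = (- dotd g u ?D x * (2 * B x) + 2 * ?D x * ?D x) / (2 * B x * (2 * B x)) * u x $ k" for k
    using cov1_sym_and_pd_dot_B(2)[OF x, of k] pd_B_and_symmetrised_cov1(1)[OF x, of k]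
    by (simp add: field_simps)
  then show ?thesis
    by blast
qed

lemma pd_H_eq: "x \<in> U \<Longrightarrow> pd j H x = - dotd g u H x * u x $ j"
proof -
  assume x: "x \<in> U"
  then obtain c where c: "pd k H x = c * u x $ k" for k
    using pd_H_parallel by blast
  have "dotd g u H x = c * (\<Sum>k\<in>UNIV. raise g u k x * u x $ k)"
    unfolding dotd_def[of g u H] c by (simp add: sum_distrib_left algebra_simps)
  then have "dotd g u H x = - c"
    unfolding raise_velocity[OF x] by simp
  then show ?thesis
    unfolding c[of j] by simp
qed

end

theorem proposition2:
  fixes U :: "(real^'n::finite) set"
    and g :: "real^'n \<Rightarrow> real^'n^'n"
    and A B :: "real^'n \<Rightarrow> real"
    and u :: "real^'n \<Rightarrow> real^'n"
  assumes "open U"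
    and "lorentzian_metric U g"
    and "smooth_on U A" and "smooth_on U B" and "\<forall>k. smooth_on U (\<lambda>x. u x $ k)"
    and "\<forall>x\<in>U. (\<Sum>i\<in>UNIV. \<Sum>j\<in>UNIV. ginv g x i j * u x $ i * u x $ j) = -1"
    and "\<forall>x\<in>U. B x \<noteq> 0"
    and "conformal_killing U g (\<lambda>x i j. A x * g x $ i $ j + B x * u x $ i * u x $ j)"
    and "divergence_free U g (\<lambda>x i j. A x * g x $ i $ j + B x * u x $ i * u x $ j)"
    and "\<forall>x\<in>U. \<forall>j. accel g u j x = 0"
    and "\<forall>x\<in>U. dotd g u B x \<noteq> 0"
  shows "let H = (\<lambda>x. dotd g u B x / (2 * B x)) in
         \<forall>x\<in>U. (\<forall>j k. cov1 g u j k x = H x * (g x $ j $ k + u x $ j * u x $ k))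
              \<and> (\<forall>j. pd j H x = - dotd g u H x * u x $ j)"
proof -
  interpret conformal_killing_fluid U g A B u
    by unfold_locales (rule assms)+
  show ?thesis
    unfolding Let_def using cov1_u_eq pd_H_eq by blast
qed

end
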